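(* Let $\hat A\in\mathbb{R}^{\hat n\times\hat n}$ and $\check A\in\mathbb{R}^{\check n\times\check n}$ be self-similarities of generic cut-and-project schemes $\hat\Lambda=(\hat{\mathcal{L}}\subset\mathbb{R}^{\hat s},\mathbb{R}^{\hat n})$ and $\check\Lambda=(\check{\mathcal{L}}\subset\mathbb{R}^{\check s},\mathbb{R}^{\check n})$, respectively. Then $A=\begin{pmatrix}\hat A&O\\O&\check A\end{pmatrix}$ is a self-similarity of the generic cut-and-project scheme $\Lambda=\hat\Lambda\oplus\check\Lambda$.
   Context: A lattice $\mathcal{L}\subset\mathbb{R}^s$ is $\{L\mathbf{r}:\mathbf{r}\in\mathbb{Z}^s\}$ for a non-singular $L\in\mathbb{R}^{s\times s}$ (an associated matrix). For $1\le n<s$ the scheme $(\mathcal{L}\subset\mathbb{R}^s,\mathbb{R}^n)$ has projections $\pi_\parallel(\mathbf{x})=(x_1,\dots,x_n)^\top$, $\pi_\perp(\mathbf{x})=(x_{n+1},\dots,x_s)^\top$; it is generic if $\pi_\parallel|_{\mathcal{L}}$, $\pi_\perp|_{\mathcal{L}}$ are injective and $\pi_\perp(\mathcal{L})$ is dense in $\mathbb{R}^{s-n}$. $A$ is a self-similarity of a generic scheme with associated matrix $L$ if $A\pi_\parallel(\mathcal{L})\subset\pi_\parallel(\mathcal{L})$ and there exist $C\in\mathbb{Z}^{s\times s}$, $B\in\mathbb{R}^{(s-n)\times(s-n)}$ with $\begin{pmatrix}A&O\\O&B\end{pmatrix}L=LC$. The direct sum $\hat\Lambda\oplus\check\Lambda$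 of schemes with associated matrices $\hat L,\check L$ is the scheme $(\mathcal{L}\subset\mathbb{R}^{\hat s+\check s},\mathbb{R}^{\hat n+\check n})$ whose lattice has associated matrix $L=P\begin{pmatrix}\hat L&O\\O&\check L\end{pmatrix}$, where $P=\begin{pmatrix}I_{\hat n}&O&O&O\\O&O&I_{\hat s-\hat n}&O\\O&I_{\check n}&O&O\\O&O&O&I_{\check s-\check n}\end{pmatrix}$. *)

theory Defs
  imports "Jordan_Normal_Form.Matrix" "Jordan_Normal_Form.Determinant"
begin

text \<open>Cut-and-project schemes are represented by (s, n, L): ambient dimension s,
 physical dimension n, and an associated matrix L (s x s, non-singular).\<close>

definition lattice :: "real mat \<Rightarrow> real vec set" where
  "lattice L = {L *\<^sub>v map_vec real_of_int r | r. r \<in> carrier_vec (dim_col L)}"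

definition pi_par :: "nat \<Rightarrow> real vec \<Rightarrow> real vec" where
  "pi_par n x = vec n (\<lambda>i. x $ i)"

definition pi_perp :: "nat \<Rightarrow> nat \<Rightarrow> real vec \<Rightarrow> real vec" where
  "pi_perp s n x = vec (s - n) (\<lambda>i. x $ (n + i))"

text \<open>Density of a set of vectors in R^m (Euclidean topology, equivalently sup-norm).\<close>
definition dense_in_Rm :: "nat \<Rightarrow> real vec set \<Rightarrow> bool" where
  "dense_in_Rm m S \<longleftrightarrow> (\<forall>y \<in> carrier_vec m. \<forall>e > 0. \<exists>x \<in> S.
       \<forall>i < m. \<bar>x $ i - y $ i\<bar> < e)"

definition generic_scheme :: "nat \<Rightarrow> nat \<Rightarrow> real mat \<Rightarrow> bool" where
  "generic_scheme s n L \<longleftrightarrow>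
     1 \<le> n \<and> n < s \<and> L \<in> carrier_mat s s \<and> det L \<noteq> 0 \<and>
     inj_on (pi_par n) (lattice L) \<and> inj_on (pi_perp s n) (lattice L) \<and>
     dense_in_Rm (s - n) (pi_perp s n ` lattice L)"

definition integer_mat :: "real mat \<Rightarrow> bool" where
  "integer_mat C \<longleftrightarrow> (\<forall>i < dim_row C. \<forall>j < dim_col C. C $$ (i, j) \<in> \<int>)"

definition self_similarity :: "nat \<Rightarrow> nat \<Rightarrow> real mat \<Rightarrow> real mat \<Rightarrow> bool" where
  "self_similarity s n L A \<longleftrightarrow>
     generic_scheme s n L \<and> A \<in> carrier_mat n n \<and>
     (\<lambda>x. A *\<^sub>v x) ` (pi_par n ` lattice L) \<subseteq> pi_par n ` lattice L \<and>
     (\<exists>C B. C \<in> carrier_mat s s \<and> integer_mat C \<and> B \<in> carrier_mat (s - n) (s - n) \<and>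
        four_block_mat A (0\<^sub>m n (s - n)) (0\<^sub>m (s - n) n) B * L = L * C)"

text \<open>The permutation matrix P of the direct sum, written blockwise with column blocks
 of sizes nh, sh-nh, nc, sc-nc and row blocks of sizes nh, nc, sh-nh, sc-nc.\<close>
definition dsum_perm :: "nat \<Rightarrow> nat \<Rightarrow> nat \<Rightarrow> nat \<Rightarrow> real mat" where
  "dsum_perm sh nh sc nc =
     four_block_mat
       (four_block_mat (1\<^sub>m nh) (0\<^sub>m nh (sh - nh)) (0\<^sub>m nc nh) (0\<^sub>m nc (sh - nh)))
       (four_block_mat (0\<^sub>m nh nc) (0\<^sub>m nh (sc - nc)) (1\<^sub>m nc) (0\<^sub>m nc (sc - nc)))
       (four_block_mat (0\<^sub>m (sh - nh) nh) (1\<^sub>m (sh - nh)) (0\<^sub>m (sc - nc) nh) (0\<^sub>m (sc - nc) (sh - nh)))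
       (four_block_mat (0\<^sub>m (sh - nh) nc) (0\<^sub>m (sh - nh) (sc - nc)) (0\<^sub>m (sc - nc) nc) (1\<^sub>m (sc - nc)))"

definition dsum_mat :: "nat \<Rightarrow> nat \<Rightarrow> real mat \<Rightarrow> nat \<Rightarrow> nat \<Rightarrow> real mat \<Rightarrow> real mat" where
  "dsum_mat sh nh Lh sc nc Lc =
     dsum_perm sh nh sc nc * four_block_mat Lh (0\<^sub>m sh sc) (0\<^sub>m sc sh) Lc"

end

theory Submission
  imports Defs
begin

(* The permutation P only regroups coordinates: the associated matrix of the direct sum maps
   (x1, x2) to the vector with physical part (pi_par (Lh x1), pi_par (Lc x2)) and internal part
   (pi_perp (Lh x1), pi_perp (Lc x2)). Hence each projection of the new lattice is the product of
   the corresponding projections of the two lattices, which gives injectivity and density factor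
   by factor, and non-singularity follows because this map is injective. Block diagonal matrices
   act factor by factor on such vectors, so the two intertwining relations
   diag(Ah, Bh) Lh = Lh Ch and diag(Ac, Bc) Lc = Lc Cc combine into one for the direct sum,
   with C = diag(Ch, Cc) and B = diag(Bh, Bc). *)

lemma vec_first_append: "a \<in> carrier_vec n \<Longrightarrow> vec_first (a @\<^sub>v b) n = a"
  unfolding vec_first_def by (intro eq_vecI) auto

lemma vec_last_append: "b \<in> carrier_vec m \<Longrightarrow> vec_last (a @\<^sub>v b) m = b"
  unfolding vec_last_def by (intro eq_vecI) auto

lemma eq_mat_via_mult_vec:
  fixes M N :: "'a :: comm_ring_1 mat"
  assumes M: "M \<in> carrier_mat n m" and N: "N \<in> carrier_mat n m"
    and MN: "\<And>x. x \<in> carrier_vec m \<Longrightarrow> M *\<^sub>v x = N *\<^sub>v x"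
  shows "M = N"
proof (rule eq_matI)
  fix i j assume ij: "i < dim_row N" "j < dim_col N"
  have "M $$ (i, j) = (M *\<^sub>v unit_vec m j) $ i"
    using M N ij by auto
  also have "\<dots> = (N *\<^sub>v unit_vec m j) $ i"
    by (simp add: MN)
  also have "\<dots> = N $$ (i, j)"
    using N ij by auto
  finally show "M $$ (i, j) = N $$ (i, j)" .
qed (use M N in auto)

lemma integer_mat_block_diag:
  assumes "integer_mat A" "integer_mat B" "A \<in> carrier_mat n n" "B \<in> carrier_mat m m"
  shows "integer_mat (four_block_mat A (0\<^sub>m n m) (0\<^sub>m m n) B)"
  using assms unfolding integer_mat_def by auto

lemma block_diag_image_append_subset:
  assumes "A \<in> carrier_mat n1 n1" "B \<in> carrier_mat n2 n2"
    and "S \<subseteq> carrier_vec n1" "T \<subseteq> carrier_vec n2"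
    and "(\<lambda>x. A *\<^sub>v x) ` S \<subseteq> S" "(\<lambda>x. B *\<^sub>v x) ` T \<subseteq> T"
  shows "(\<lambda>x. four_block_mat A (0\<^sub>m n1 n2) (0\<^sub>m n2 n1) B *\<^sub>v x) `
      {a @\<^sub>v b | a b. a \<in> S \<and> b \<in> T} \<subseteq> {a @\<^sub>v b | a b. a \<in> S \<and> b \<in> T}"
proof clarify
  fix a b assume "a \<in> S" "b \<in> T"
  with assms show "\<exists>a' b'. four_block_mat A (0\<^sub>m n1 n2) (0\<^sub>m n2 n1) B *\<^sub>v (a @\<^sub>v b) =
      a' @\<^sub>v b' \<and> a' \<in> S \<and> b' \<in> T"
    by (subst mult_mat_vec_split) blast+
qed

lemma dense_in_Rm_append:
  assumes S: "dense_in_Rm m1 S" "S \<subseteq> carrier_vec m1"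
    and T: "dense_in_Rm m2 T" "T \<subseteq> carrier_vec m2"
  shows "dense_in_Rm (m1 + m2) {x1 @\<^sub>v x2 | x1 x2. x1 \<in> S \<and> x2 \<in> T}"
  unfolding dense_in_Rm_def
proof (intro ballI allI impI)
  fix y :: "real vec" and e :: real
  assume y: "y \<in> carrier_vec (m1 + m2)" and e: "e > 0"
  obtain x1 where x1: "x1 \<in> S" "\<forall>i < m1. \<bar>x1 $ i - vec_first y m1 $ i\<bar> < e"
    using S(1) e unfolding dense_in_Rm_def by (meson vec_first_carrier)
  obtain x2 where x2: "x2 \<in> T" "\<forall>i < m2. \<bar>x2 $ i - vec_last y m2 $ i\<bar> < e"
    using T(1) e unfolding dense_in_Rm_def by (meson vec_last_carrier)
  have dims: "dim_vec x1 = m1" "dim_vec x2 = m2"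
    using x1(1) x2(1) S(2) T(2) by auto
  have "\<bar>(x1 @\<^sub>v x2) $ i - y $ i\<bar> < e" if i: "i < m1 + m2" for i
  proof (cases "i < m1")
    case True
    then show ?thesis
      using x1(2) dims by (simp add: vec_first_def)
  next
    case False
    then have "i - m1 < m2" "vec_last y m2 $ (i - m1) = y $ i"
      using i y by (auto simp: vec_last_def)
    moreover have "(x1 @\<^sub>v x2) $ i = x2 $ (i - m1)"
      using i dims False by simp
    ultimately show ?thesis
      using x2(2) by metis
  qed
  then show "\<exists>x \<in> {x1 @\<^sub>v x2 | x1 x2. x1 \<in> S \<and> x2 \<in> T}. \<forall>i < m1 + m2. \<bar>x $ i - y $ i\<bar> < e"
    using x1(1) x2(1) by blast
qed

lemma pi_par_carrier [simp]: "pi_par n u \<in> carrier_vec n"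
  unfolding pi_par_def by simp

lemma pi_perp_carrier [simp]: "pi_perp s n u \<in> carrier_vec (s - n)"
  unfolding pi_perp_def by simp

lemma pi_par_append: "a \<in> carrier_vec n \<Longrightarrow> pi_par n (a @\<^sub>v b) = a"
  unfolding pi_par_def by (intro eq_vecI) auto

lemma pi_perp_append:
  "a \<in> carrier_vec n \<Longrightarrow> b \<in> carrier_vec (s - n) \<Longrightarrow> n \<le> s \<Longrightarrow> pi_perp s n (a @\<^sub>v b) = b"
  unfolding pi_perp_def by (intro eq_vecI) auto

lemma pi_par_append_pi_perp:
  "u \<in> carrier_vec s \<Longrightarrow> n \<le> s \<Longrightarrow> pi_par n u @\<^sub>v pi_perp s n u = u"
  unfolding pi_par_def pi_perp_def by (intro eq_vecI) auto

lemma block_diag_carrier_mat: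
  assumes "A \<in> carrier_mat n n" "B \<in> carrier_mat (s - n) (s - n)" "n \<le> s"
  shows "four_block_mat A (0\<^sub>m n (s - n)) (0\<^sub>m (s - n) n) B \<in> carrier_mat s s"
  using four_block_carrier_mat[OF assms(1,2)] assms(3) by simp

lemma block_diag_mult_vec:
  assumes "A \<in> carrier_mat n n" "B \<in> carrier_mat (s - n) (s - n)" "n \<le> s" "u \<in> carrier_vec s"
  shows "four_block_mat A (0\<^sub>m n (s - n)) (0\<^sub>m (s - n) n) B *\<^sub>v u =
    A *\<^sub>v pi_par n u @\<^sub>v B *\<^sub>v pi_perp s n u"
  using mult_mat_vec_split[OF assms(1,2) pi_par_carrier pi_perp_carrier, of u u]
  by (simp add: pi_par_append_pi_perp assms)

lemma dsum_dims:
  fixes sh nh sc nc :: nat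
  assumes "nh \<le> sh" "nc \<le> sc"
  shows "(sh + sc) - (nh + nc) = (sh - nh) + (sc - nc)"
    and "(nh + nc) + ((sh - nh) + (sc - nc)) = sh + sc"
    and "(nh + (sh - nh)) + (nc + (sc - nc)) = sh + sc"
  using assms by auto

lemma dsum_perm_carrier:
  assumes "nh \<le> sh" "nc \<le> sc"
  shows "dsum_perm sh nh sc nc \<in> carrier_mat (sh + sc) (sh + sc)"
proof -
  have "dsum_perm sh nh sc nc \<in>
      carrier_mat ((nh + nc) + ((sh - nh) + (sc - nc))) ((nh + (sh - nh)) + (nc + (sc - nc)))"
    unfolding dsum_perm_def by (intro four_block_carrier_mat) auto
  then show ?thesis
    unfolding dsum_dims(2,3)[OF assms] .
qed

lemma dsum_perm_mult_vec:
  assumes "nh \<le> sh" "nc \<le> sc" "a \<in> carrier_vec nh" "b \<in> carrier_vec (sh - nh)"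
    "c \<in> carrier_vec nc" "d \<in> carrier_vec (sc - nc)"
  shows "dsum_perm sh nh sc nc *\<^sub>v ((a @\<^sub>v b) @\<^sub>v (c @\<^sub>v d)) = (a @\<^sub>v c) @\<^sub>v (b @\<^sub>v d)"
proof -
  let ?P1 = "four_block_mat (1\<^sub>m nh) (0\<^sub>m nh (sh - nh)) (0\<^sub>m nc nh) (0\<^sub>m nc (sh - nh))"
  let ?P2 = "four_block_mat (0\<^sub>m nh nc) (0\<^sub>m nh (sc - nc)) (1\<^sub>m nc) (0\<^sub>m nc (sc - nc))"
  let ?P3 = "four_block_mat (0\<^sub>m (sh - nh) nh) (1\<^sub>m (sh - nh)) (0\<^sub>m (sc - nc) nh)
    (0\<^sub>m (sc - nc) (sh - nh))"
  let ?P4 = "four_block_mat (0\<^sub>m (sh - nh) nc) (0\<^sub>m (sh - nh) (sc - nc)) (0\<^sub>m (sc - nc) nc)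
    (1\<^sub>m (sc - nc))"
  have blocks: "?P1 *\<^sub>v (a @\<^sub>v b) = a @\<^sub>v 0\<^sub>v nc" "?P2 *\<^sub>v (c @\<^sub>v d) = 0\<^sub>v nh @\<^sub>v c"
    "?P3 *\<^sub>v (a @\<^sub>v b) = b @\<^sub>v 0\<^sub>v (sc - nc)" "?P4 *\<^sub>v (c @\<^sub>v d) = 0\<^sub>v (sh - nh) @\<^sub>v d"
    using assms by (subst four_block_mat_mult_vec; force)+
  have ab: "a @\<^sub>v b \<in> carrier_vec (nh + (sh - nh))"
    using assms(3,4) by (rule append_carrier_vec)
  have cd: "c @\<^sub>v d \<in> carrier_vec (nc + (sc - nc))"
    using assms(5,6) by (rule append_carrier_vec)
  have "dsum_perm sh nh sc nc *\<^sub>v ((a @\<^sub>v b) @\<^sub>v (c @\<^sub>v d)) =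
      (?P1 *\<^sub>v (a @\<^sub>v b) + ?P2 *\<^sub>v (c @\<^sub>v d)) @\<^sub>v (?P3 *\<^sub>v (a @\<^sub>v b) + ?P4 *\<^sub>v (c @\<^sub>v d))"
    unfolding dsum_perm_def by (rule four_block_mat_mult_vec[OF _ _ _ _ ab cd]) auto
  also have "\<dots> = (a @\<^sub>v c) @\<^sub>v (b @\<^sub>v d)"
    unfolding blocks using assms
    by (simp add: append_vec_add[of a nh "0\<^sub>v nh" "0\<^sub>v nc" nc c]
        append_vec_add[of b "sh - nh" "0\<^sub>v (sh - nh)" "0\<^sub>v (sc - nc)" "sc - nc" d])
  finally show ?thesis .
qed

lemma dsum_mat_carrier:
  assumes "Lh \<in> carrier_mat sh sh" "Lc \<in> carrier_mat sc sc" "nh \<le> sh" "nc \<le> sc"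
  shows "dsum_mat sh nh Lh sc nc Lc \<in> carrier_mat (sh + sc) (sh + sc)"
  unfolding dsum_mat_def using assms dsum_perm_carrier by (intro mult_carrier_mat) auto

text \<open>\<^term>\<open>dsum_vec sh nh sc nc u v\<close> is the image of \<^term>\<open>u @\<^sub>v v\<close>
  under the permutation matrix \<^term>\<open>dsum_perm sh nh sc nc\<close>.\<close>

definition dsum_vec :: "nat \<Rightarrow> nat \<Rightarrow> nat \<Rightarrow> nat \<Rightarrow> real vec \<Rightarrow> real vec \<Rightarrow> real vec" where
  "dsum_vec sh nh sc nc u v =
     (pi_par nh u @\<^sub>v pi_par nc v) @\<^sub>v (pi_perp sh nh u @\<^sub>v pi_perp sc nc v)"

lemma pi_par_dsum_vec:
  "pi_par (nh + nc) (dsum_vec sh nh sc nc u v) = pi_par nh u @\<^sub>v pi_par nc v"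
  unfolding dsum_vec_def by (rule pi_par_append) auto

lemma pi_perp_dsum_vec:
  assumes "nh \<le> sh" "nc \<le> sc"
  shows "pi_perp (sh + sc) (nh + nc) (dsum_vec sh nh sc nc u v) =
    pi_perp sh nh u @\<^sub>v pi_perp sc nc v"
proof -
  have "pi_perp sh nh u @\<^sub>v pi_perp sc nc v \<in> carrier_vec ((sh + sc) - (nh + nc))"
    unfolding dsum_dims(1)[OF assms] by (intro append_carrier_vec pi_perp_carrier)
  then show ?thesis
    unfolding dsum_vec_def using assms by (intro pi_perp_append) auto
qed

lemma dsum_vec_inject:
  assumes "nh \<le> sh" "nc \<le> sc" "u \<in> carrier_vec sh" "u' \<in> carrier_vec sh"
    "v \<in> carrier_vec sc" "v' \<in> carrier_vec sc"
  shows "dsum_vec sh nh sc nc u v = dsum_vec sh nh sc nc u' v' \<longleftrightarrow> u = u' \<and> v = v'"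
proof
  assume "dsum_vec sh nh sc nc u v = dsum_vec sh nh sc nc u' v'"
  then have "pi_par nh u @\<^sub>v pi_par nc v = pi_par nh u' @\<^sub>v pi_par nc v'"
    and "pi_perp sh nh u @\<^sub>v pi_perp sc nc v = pi_perp sh nh u' @\<^sub>v pi_perp sc nc v'"
    unfolding dsum_vec_def by (subst (asm) append_vec_eq[of _ "nh + nc"]; simp)+
  then have "pi_par nh u = pi_par nh u'" "pi_par nc v = pi_par nc v'"
     "pi_perp sh nh u = pi_perp sh nh u'" "pi_perp sc nc v = pi_perp sc nc v'"
    by (simp_all add: append_vec_eq[OF pi_par_carrier pi_par_carrier]
        append_vec_eq[OF pi_perp_carrier pi_perp_carrier])
  then show "u = u' \<and> v = v'"
    using assms by (metis pi_par_append_pi_perp)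
qed simp

lemma dsum_vec_zero:
  assumes "nh \<le> sh" "nc \<le> sc"
  shows "dsum_vec sh nh sc nc (0\<^sub>v sh) (0\<^sub>v sc) = 0\<^sub>v (sh + sc)"
  using assms unfolding dsum_vec_def pi_par_def pi_perp_def by (intro eq_vecI) auto

lemma dsum_mat_mult_vec:
  assumes "Lh \<in> carrier_mat sh sh" "Lc \<in> carrier_mat sc sc" "nh \<le> sh" "nc \<le> sc"
    and "x \<in> carrier_vec (sh + sc)"
  shows "dsum_mat sh nh Lh sc nc Lc *\<^sub>v x =
    dsum_vec sh nh sc nc (Lh *\<^sub>v vec_first x sh) (Lc *\<^sub>v vec_last x sc)"
proof -
  let ?u = "Lh *\<^sub>v vec_first x sh" and ?v = "Lc *\<^sub>v vec_last x sc"
  have "four_block_mat Lh (0\<^sub>m sh sc) (0\<^sub>m sc sh) Lc *\<^sub>v x = ?u @\<^sub>v ?v"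
    using mult_mat_vec_split[OF assms(1,2) vec_first_carrier vec_last_carrier, of x x] assms(5)
    by simp
  then have "dsum_mat sh nh Lh sc nc Lc *\<^sub>v x = dsum_perm sh nh sc nc *\<^sub>v (?u @\<^sub>v ?v)"
    unfolding dsum_mat_def using assms dsum_perm_carrier
    by (subst assoc_mult_mat_vec[of _ "sh + sc" "sh + sc" _ "sh + sc"]) auto
  also have "\<dots> = dsum_perm sh nh sc nc *\<^sub>v
      ((pi_par nh ?u @\<^sub>v pi_perp sh nh ?u) @\<^sub>v (pi_par nc ?v @\<^sub>v pi_perp sc nc ?v))"
    using assms by (simp add: pi_par_append_pi_perp)
  also have "\<dots> = dsum_vec sh nh sc nc ?u ?v"
    unfolding dsum_vec_def using assms by (intro dsum_perm_mult_vec) auto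
  finally show ?thesis .
qed

lemma lattice_dsum_mat:
  assumes "Lh \<in> carrier_mat sh sh" "Lc \<in> carrier_mat sc sc" "nh \<le> sh" "nc \<le> sc"
  shows "lattice (dsum_mat sh nh Lh sc nc Lc) =
    {dsum_vec sh nh sc nc u v | u v. u \<in> lattice Lh \<and> v \<in> lattice Lc}"
proof (intro equalityI subsetI)
  fix x assume "x \<in> lattice (dsum_mat sh nh Lh sc nc Lc)"
  then obtain r where r: "r \<in> carrier_vec (sh + sc)"
    and x: "x = dsum_mat sh nh Lh sc nc Lc *\<^sub>v map_vec real_of_int r"
    unfolding lattice_def using dsum_mat_carrier[OF assms] by auto
  have "vec_first (map_vec real_of_int r) sh = map_vec real_of_int (vec_first r sh)"
    and "vec_last (map_vec real_of_int r) sc = map_vec real_of_int (vec_last r sc)"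
    using r unfolding vec_first_def vec_last_def by (auto intro!: eq_vecI)
  then have "x = dsum_vec sh nh sc nc (Lh *\<^sub>v map_vec real_of_int (vec_first r sh))
      (Lc *\<^sub>v map_vec real_of_int (vec_last r sc))"
    unfolding x using r by (simp add: dsum_mat_mult_vec[OF assms])
  moreover have "Lh *\<^sub>v map_vec real_of_int (vec_first r sh) \<in> lattice Lh"
    and "Lc *\<^sub>v map_vec real_of_int (vec_last r sc) \<in> lattice Lc"
    unfolding lattice_def using assms(1,2) by auto
  ultimately show "x \<in> {dsum_vec sh nh sc nc u v | u v. u \<in> lattice Lh \<and> v \<in> lattice Lc}"
    by blast
next
  fix x assume "x \<in> {dsum_vec sh nh sc nc u v | u v. u \<in> lattice Lh \<and> v \<in> lattice Lc}"
  then obtain r1 r2 where r1: "r1 \<in> carrier_vec sh" and r2: "r2 \<in> carrier_vec sc"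
    and x: "x = dsum_vec sh nh sc nc (Lh *\<^sub>v map_vec real_of_int r1)
      (Lc *\<^sub>v map_vec real_of_int r2)"
    unfolding lattice_def using assms(1,2) by auto
  let ?r = "map_vec real_of_int (r1 @\<^sub>v r2)"
  have "?r = map_vec real_of_int r1 @\<^sub>v map_vec real_of_int r2"
    by (intro eq_vecI) auto
  then have "dsum_mat sh nh Lh sc nc Lc *\<^sub>v ?r = x"
    unfolding x using r1 r2
    by (subst dsum_mat_mult_vec[OF assms]) (auto simp: vec_first_append vec_last_append)
  moreover have "r1 @\<^sub>v r2 \<in> carrier_vec (dim_col (dsum_mat sh nh Lh sc nc Lc))"
    using dsum_mat_carrier[OF assms] r1 r2 by auto
  ultimately show "x \<in> lattice (dsum_mat sh nh Lh sc nc Lc)"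
    unfolding lattice_def by blast
qed

lemma image_lattice_dsum_mat:
  assumes "Lh \<in> carrier_mat sh sh" "Lc \<in> carrier_mat sc sc" "nh \<le> sh" "nc \<le> sc"
    and f: "\<And>u v. f (dsum_vec sh nh sc nc u v) = fh u @\<^sub>v fc v"
  shows "f ` lattice (dsum_mat sh nh Lh sc nc Lc) =
    {x1 @\<^sub>v x2 | x1 x2. x1 \<in> fh ` lattice Lh \<and> x2 \<in> fc ` lattice Lc}"
proof (intro equalityI subsetI)
  fix z assume "z \<in> f ` lattice (dsum_mat sh nh Lh sc nc Lc)"
  then show "z \<in> {x1 @\<^sub>v x2 | x1 x2. x1 \<in> fh ` lattice Lh \<and> x2 \<in> fc ` lattice Lc}"
    unfolding lattice_dsum_mat[OF assms(1-4)] by (auto simp: f) blast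
next
  fix z assume "z \<in> {x1 @\<^sub>v x2 | x1 x2. x1 \<in> fh ` lattice Lh \<and> x2 \<in> fc ` lattice Lc}"
  then obtain u v where "u \<in> lattice Lh" "v \<in> lattice Lc" "z = f (dsum_vec sh nh sc nc u v)"
    by (auto simp: f)
  then show "z \<in> f ` lattice (dsum_mat sh nh Lh sc nc Lc)"
    unfolding lattice_dsum_mat[OF assms(1-4)] by blast
qed

lemma inj_on_lattice_dsum_mat:
  assumes "Lh \<in> carrier_mat sh sh" "Lc \<in> carrier_mat sc sc" "nh \<le> sh" "nc \<le> sc"
    and "inj_on fh (lattice Lh)" "inj_on fc (lattice Lc)" "\<And>u. fh u \<in> carrier_vec k"
    and "\<And>u v. f (dsum_vec sh nh sc nc u v) = fh u @\<^sub>v fc v"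
  shows "inj_on f (lattice (dsum_mat sh nh Lh sc nc Lc))"
proof (rule inj_onI)
  fix x y assume "x \<in> lattice (dsum_mat sh nh Lh sc nc Lc)"
    and "y \<in> lattice (dsum_mat sh nh Lh sc nc Lc)" and f: "f x = f y"
  then obtain u v u' v' where uv: "u \<in> lattice Lh" "v \<in> lattice Lc" "x = dsum_vec sh nh sc nc u v"
    "u' \<in> lattice Lh" "v' \<in> lattice Lc" "y = dsum_vec sh nh sc nc u' v'"
    unfolding lattice_dsum_mat[OF assms(1-4)] by auto
  have "fh u = fh u'" "fc v = fc v'"
    using f uv append_vec_eq[OF assms(7) assms(7)] by (simp_all add: assms(8))
  then show "x = y"
    using uv assms(5,6) by (simp add: inj_on_eq_iff)
qed

lemma det_dsum_mat_neq_0: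
  assumes "Lh \<in> carrier_mat sh sh" "Lc \<in> carrier_mat sc sc" "nh \<le> sh" "nc \<le> sc"
    and "det Lh \<noteq> 0" "det Lc \<noteq> 0"
  shows "det (dsum_mat sh nh Lh sc nc Lc) \<noteq> 0"
proof
  assume "det (dsum_mat sh nh Lh sc nc Lc) = 0"
  then obtain x where x: "x \<in> carrier_vec (sh + sc)" "x \<noteq> 0\<^sub>v (sh + sc)"
    and "dsum_mat sh nh Lh sc nc Lc *\<^sub>v x = 0\<^sub>v (sh + sc)"
    using det_0_iff_vec_prod_zero[OF dsum_mat_carrier[OF assms(1-4)]] by auto
  then have "dsum_vec sh nh sc nc (Lh *\<^sub>v vec_first x sh) (Lc *\<^sub>v vec_last x sc) =
      dsum_vec sh nh sc nc (0\<^sub>v sh) (0\<^sub>v sc)"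
    by (simp add: dsum_mat_mult_vec[OF assms(1-4)] dsum_vec_zero[OF assms(3,4)])
  then have "Lh *\<^sub>v vec_first x sh = 0\<^sub>v sh" "Lc *\<^sub>v vec_last x sc = 0\<^sub>v sc"
    using assms(1,2) by (simp_all add: dsum_vec_inject[OF assms(3,4)])
  then have "vec_first x sh = 0\<^sub>v sh" "vec_last x sc = 0\<^sub>v sc"
    using det_0_iff_vec_prod_zero[OF assms(1)] det_0_iff_vec_prod_zero[OF assms(2)] assms(5,6)
    by (meson vec_first_carrier vec_last_carrier)+
  then have "x = 0\<^sub>v sh @\<^sub>v 0\<^sub>v sc"
    using vec_first_last_append[OF x(1)] by metis
  also have "\<dots> = 0\<^sub>v (sh + sc)"
    by (intro eq_vecI) auto
  finally show False
    using x(2) by simp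
qed

lemma generic_scheme_dsum_mat:
  assumes "generic_scheme sh nh Lh" and "generic_scheme sc nc Lc"
  shows "generic_scheme (sh + sc) (nh + nc) (dsum_mat sh nh Lh sc nc Lc)"
proof -
  let ?lat = "lattice (dsum_mat sh nh Lh sc nc Lc)"
  from assms have h: "1 \<le> nh" "nh < sh" "Lh \<in> carrier_mat sh sh" "det Lh \<noteq> 0"
    "inj_on (pi_par nh) (lattice Lh)" "inj_on (pi_perp sh nh) (lattice Lh)"
    "dense_in_Rm (sh - nh) (pi_perp sh nh ` lattice Lh)"
    and c: "nc < sc" "Lc \<in> carrier_mat sc sc" "det Lc \<noteq> 0"
    "inj_on (pi_par nc) (lattice Lc)" "inj_on (pi_perp sc nc) (lattice Lc)"
    "dense_in_Rm (sc - nc) (pi_perp sc nc ` lattice Lc)"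
    unfolding generic_scheme_def by blast+
  then have dims: "Lh \<in> carrier_mat sh sh" "Lc \<in> carrier_mat sc sc" "nh \<le> sh" "nc \<le> sc"
    by auto
  have "pi_perp (sh + sc) (nh + nc) ` ?lat =
      {x1 @\<^sub>v x2 | x1 x2. x1 \<in> pi_perp sh nh ` lattice Lh \<and> x2 \<in> pi_perp sc nc ` lattice Lc}"
    by (rule image_lattice_dsum_mat[OF dims]) (rule pi_perp_dsum_vec[OF dims(3,4)])
  then have "dense_in_Rm ((sh - nh) + (sc - nc)) (pi_perp (sh + sc) (nh + nc) ` ?lat)"
    using h(7) c(6) by (simp add: dense_in_Rm_append image_subsetI)
  then have "dense_in_Rm ((sh + sc) - (nh + nc)) (pi_perp (sh + sc) (nh + nc) ` ?lat)"
    unfolding dsum_dims(1)[OF dims(3,4)] .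
  moreover have "inj_on (pi_par (nh + nc)) ?lat"
    using h(5) c(4)
    by (rule inj_on_lattice_dsum_mat[where k = nh, OF dims]) (simp_all add: pi_par_dsum_vec)
  moreover have "inj_on (pi_perp (sh + sc) (nh + nc)) ?lat"
    using h(6) c(5)
    by (rule inj_on_lattice_dsum_mat[where k = "sh - nh", OF dims])
      (simp_all add: pi_perp_dsum_vec[OF dims(3,4)])
  ultimately show ?thesis
    unfolding generic_scheme_def using h(1,2) c(1) dims
    by (simp add: dsum_mat_carrier det_dsum_mat_neq_0 h(4) c(3))
qed

lemma dsum_block_diag_carrier_mat:
  assumes "Bh \<in> carrier_mat (sh - nh) (sh - nh)" "Bc \<in> carrier_mat (sc - nc) (sc - nc)"
    and "nh \<le> sh" "nc \<le> sc"
  shows "four_block_mat Bh (0\<^sub>m (sh - nh) (sc - nc)) (0\<^sub>m (sc - nc) (sh - nh)) Bc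
    \<in> carrier_mat ((sh + sc) - (nh + nc)) ((sh + sc) - (nh + nc))"
  unfolding dsum_dims(1)[OF assms(3,4)] using assms(1,2) by (rule four_block_carrier_mat)

lemma dsum_block_diag_mult_dsum_vec:
  assumes "Ah \<in> carrier_mat nh nh" "Bh \<in> carrier_mat (sh - nh) (sh - nh)"
    and "Ac \<in> carrier_mat nc nc" "Bc \<in> carrier_mat (sc - nc) (sc - nc)"
    and "nh \<le> sh" "nc \<le> sc" "u \<in> carrier_vec sh" "v \<in> carrier_vec sc"
  shows "four_block_mat (four_block_mat Ah (0\<^sub>m nh nc) (0\<^sub>m nc nh) Ac)
      (0\<^sub>m (nh + nc) ((sh + sc) - (nh + nc))) (0\<^sub>m ((sh + sc) - (nh + nc)) (nh + nc))
      (four_block_mat Bh (0\<^sub>m (sh - nh) (sc - nc)) (0\<^sub>m (sc - nc) (sh - nh)) Bc)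
      *\<^sub>v dsum_vec sh nh sc nc u v =
    dsum_vec sh nh sc nc (four_block_mat Ah (0\<^sub>m nh (sh - nh)) (0\<^sub>m (sh - nh) nh) Bh *\<^sub>v u)
      (four_block_mat Ac (0\<^sub>m nc (sc - nc)) (0\<^sub>m (sc - nc) nc) Bc *\<^sub>v v)"
proof -
  note B = dsum_block_diag_carrier_mat[OF assms(2,4-6)]
  have perp: "pi_perp sh nh u @\<^sub>v pi_perp sc nc v \<in> carrier_vec ((sh + sc) - (nh + nc))"
    unfolding dsum_dims(1)[OF assms(5,6)] by (intro append_carrier_vec pi_perp_carrier)
  show ?thesis
    unfolding dsum_vec_def using assms
    by (simp add: mult_mat_vec_split[OF _ B _ perp] block_diag_mult_vec pi_par_append
        pi_perp_append mult_mat_vec_split)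
qed

lemma dsum_mat_intertwining:
  assumes L: "Lh \<in> carrier_mat sh sh" "Lc \<in> carrier_mat sc sc" "nh \<le> sh" "nc \<le> sc"
    and AB: "Ah \<in> carrier_mat nh nh" "Bh \<in> carrier_mat (sh - nh) (sh - nh)"
      "Ac \<in> carrier_mat nc nc" "Bc \<in> carrier_mat (sc - nc) (sc - nc)"
    and C: "Ch \<in> carrier_mat sh sh" "Cc \<in> carrier_mat sc sc"
    and h: "four_block_mat Ah (0\<^sub>m nh (sh - nh)) (0\<^sub>m (sh - nh) nh) Bh * Lh = Lh * Ch"
    and c: "four_block_mat Ac (0\<^sub>m nc (sc - nc)) (0\<^sub>m (sc - nc) nc) Bc * Lc = Lc * Cc"
  shows "four_block_mat (four_block_mat Ah (0\<^sub>m nh nc) (0\<^sub>m nc nh) Ac)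
      (0\<^sub>m (nh + nc) ((sh + sc) - (nh + nc))) (0\<^sub>m ((sh + sc) - (nh + nc)) (nh + nc))
      (four_block_mat Bh (0\<^sub>m (sh - nh) (sc - nc)) (0\<^sub>m (sc - nc) (sh - nh)) Bc)
      * dsum_mat sh nh Lh sc nc Lc =
    dsum_mat sh nh Lh sc nc Lc * four_block_mat Ch (0\<^sub>m sh sc) (0\<^sub>m sc sh) Cc"
    (is "?M * ?L = ?L * ?C")
proof -
  let ?Mh = "four_block_mat Ah (0\<^sub>m nh (sh - nh)) (0\<^sub>m (sh - nh) nh) Bh"
  let ?Mc = "four_block_mat Ac (0\<^sub>m nc (sc - nc)) (0\<^sub>m (sc - nc) nc) Bc"
  have Mh: "?Mh \<in> carrier_mat sh sh" and Mc: "?Mc \<in> carrier_mat sc sc"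
    using AB L by (simp_all add: block_diag_carrier_mat)
  have M: "?M \<in> carrier_mat (sh + sc) (sh + sc)"
    using AB L(3,4)
    by (intro block_diag_carrier_mat dsum_block_diag_carrier_mat four_block_carrier_mat) auto
  have L': "?L \<in> carrier_mat (sh + sc) (sh + sc)" and C': "?C \<in> carrier_mat (sh + sc) (sh + sc)"
    using L C by (simp_all add: dsum_mat_carrier)
  show ?thesis
  proof (rule eq_mat_via_mult_vec)
    fix x :: "real vec" assume x: "x \<in> carrier_vec (sh + sc)"
    let ?x1 = "vec_first x sh" and ?x2 = "vec_last x sc"
    have "(?M * ?L) *\<^sub>v x = ?M *\<^sub>v dsum_vec sh nh sc nc (Lh *\<^sub>v ?x1) (Lc *\<^sub>v ?x2)"
      unfolding assoc_mult_mat_vec[OF M L' x] dsum_mat_mult_vec[OF L x] ..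
    also have "\<dots> = dsum_vec sh nh sc nc (?Mh *\<^sub>v (Lh *\<^sub>v ?x1)) (?Mc *\<^sub>v (Lc *\<^sub>v ?x2))"
      using L by (intro dsum_block_diag_mult_dsum_vec AB mult_mat_vec_carrier) auto
    also have "\<dots> = dsum_vec sh nh sc nc (Lh *\<^sub>v (Ch *\<^sub>v ?x1)) (Lc *\<^sub>v (Cc *\<^sub>v ?x2))"
      using assoc_mult_mat_vec[OF Mh L(1) vec_first_carrier, symmetric]
        assoc_mult_mat_vec[OF Mc L(2) vec_last_carrier, symmetric]
        assoc_mult_mat_vec[OF L(1) C(1) vec_first_carrier]
        assoc_mult_mat_vec[OF L(2) C(2) vec_last_carrier]
      by (simp only: h c)
    also have "\<dots> = ?L *\<^sub>v (Ch *\<^sub>v ?x1 @\<^sub>v Cc *\<^sub>v ?x2)"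
      using C by (subst dsum_mat_mult_vec[OF L]) (auto simp: vec_first_append vec_last_append)
    also have "Ch *\<^sub>v ?x1 @\<^sub>v Cc *\<^sub>v ?x2 = ?C *\<^sub>v x"
      using mult_mat_vec_split[OF C vec_first_carrier vec_last_carrier, of x x] x by simp
    also have "?L *\<^sub>v (?C *\<^sub>v x) = (?L * ?C) *\<^sub>v x"
      by (rule assoc_mult_mat_vec[OF L' C' x, symmetric])
    finally show "(?M * ?L) *\<^sub>v x = (?L * ?C) *\<^sub>v x" .
  qed (use M L' C' in auto)
qed

lemma self_similarity_dsum_mat:
  assumes "self_similarity sh nh Lh Ah" and "self_similarity sc nc Lc Ac"
  shows "self_similarity (sh + sc) (nh + nc) (dsum_mat sh nh Lh sc nc Lc)
    (four_block_mat Ah (0\<^sub>m nh nc) (0\<^sub>m nc nh) Ac)"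
proof -
  obtain Ch Bh where gh: "generic_scheme sh nh Lh" and Ah: "Ah \<in> carrier_mat nh nh"
    and imh: "(\<lambda>x. Ah *\<^sub>v x) ` (pi_par nh ` lattice Lh) \<subseteq> pi_par nh ` lattice Lh"
    and Ch: "Ch \<in> carrier_mat sh sh" "integer_mat Ch" and Bh: "Bh \<in> carrier_mat (sh - nh) (sh - nh)"
    and h: "four_block_mat Ah (0\<^sub>m nh (sh - nh)) (0\<^sub>m (sh - nh) nh) Bh * Lh = Lh * Ch"
    using assms(1) unfolding self_similarity_def by blast
  obtain Cc Bc where gc: "generic_scheme sc nc Lc" and Ac: "Ac \<in> carrier_mat nc nc"
    and imc: "(\<lambda>x. Ac *\<^sub>v x) ` (pi_par nc ` lattice Lc) \<subseteq> pi_par nc ` lattice Lc"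
    and Cc: "Cc \<in> carrier_mat sc sc" "integer_mat Cc" and Bc: "Bc \<in> carrier_mat (sc - nc) (sc - nc)"
    and c: "four_block_mat Ac (0\<^sub>m nc (sc - nc)) (0\<^sub>m (sc - nc) nc) Bc * Lc = Lc * Cc"
    using assms(2) unfolding self_similarity_def by blast
  have L: "Lh \<in> carrier_mat sh sh" "Lc \<in> carrier_mat sc sc" "nh \<le> sh" "nc \<le> sc"
    using gh gc unfolding generic_scheme_def by auto
  have "pi_par (nh + nc) ` lattice (dsum_mat sh nh Lh sc nc Lc) =
      {a @\<^sub>v b | a b. a \<in> pi_par nh ` lattice Lh \<and> b \<in> pi_par nc ` lattice Lc}"
    by (rule image_lattice_dsum_mat[OF L]) (rule pi_par_dsum_vec)
  then have "(\<lambda>x. four_block_mat Ah (0\<^sub>m nh nc) (0\<^sub>m nc nh) Ac *\<^sub>v x) `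
      (pi_par (nh + nc) ` lattice (dsum_mat sh nh Lh sc nc Lc))
      \<subseteq> pi_par (nh + nc) ` lattice (dsum_mat sh nh Lh sc nc Lc)"
    using Ah Ac imh imc by (simp add: block_diag_image_append_subset image_subsetI)
  moreover have "integer_mat (four_block_mat Ch (0\<^sub>m sh sc) (0\<^sub>m sc sh) Cc)"
    using Ch Cc by (intro integer_mat_block_diag)
  ultimately show ?thesis
    unfolding self_similarity_def
    using generic_scheme_dsum_mat[OF gh gc] Ah Ac Ch(1) Cc(1)
      dsum_block_diag_carrier_mat[OF Bh Bc L(3,4)]
      dsum_mat_intertwining[OF L Ah Bh Ac Bc Ch(1) Cc(1) h c]
    by (intro conjI exI[of _ "four_block_mat Ch (0\<^sub>m sh sc) (0\<^sub>m sc sh) Cc"] exI) auto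
qed

theorem lemma5:
  fixes sh nh sc nc :: nat and Lh Lc Ah Ac :: "real mat"
  assumes "generic_scheme sh nh Lh" and "generic_scheme sc nc Lc"
    and "self_similarity sh nh Lh Ah" and "self_similarity sc nc Lc Ac"
  shows "generic_scheme (sh + sc) (nh + nc) (dsum_mat sh nh Lh sc nc Lc) \<and>
         self_similarity (sh + sc) (nh + nc) (dsum_mat sh nh Lh sc nc Lc)
           (four_block_mat Ah (0\<^sub>m nh nc) (0\<^sub>m nc nh) Ac)"
  using generic_scheme_dsum_mat[OF assms(1,2)] self_similarity_dsum_mat[OF assms(3,4)] by blast

end
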